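(* With the notation of the context, the following identities hold for all $(t,s)\in I\times I$, each whenever the Green's functions appearing in it exist: (i) $G_{M_1}[T](t,s)=G_A[2T](t,s)-G_A[2T](2T-t,s)$; (ii) $G_{M_2}[T](t,s)=G_A[2T](t,s)+G_A[2T](2T-t,s)$; (iii) $G_{M_1}[T](t,s)=G_N[2T](t,s)-G_N[2T](2T-t,s)$; (iv) $G_{M_2}[T](t,s)=G_D[2T](t,s)+G_D[2T](2T-t,s)$; (v) $G_{M_1}[T](t,s)=G_P[4T](t,s)+G_P[4T](4T-t,s)-G_P[4T](2T-t,s)-G_P[4T](2T+t,s)$; (vi) $G_{M_2}[T](t,s)=G_P[4T](t,s)-G_P[4T](4T-t,s)+G_P[4T](2T-t,s)-G_P[4T](2T+t,s)$.
   Context: Fix $n\ge 1$, $T>0$, $I=[0,T]$, $J=[0,2T]$. $W^{2n,1}(K)$ denotes the set of $u\in C^{2n-1}(K)$ with $u^{(2n-1)}$ absolutely continuous on the interval $K$. Let $a_0,\dots,a_{2n-1}\in L^{\alpha}(I)$, $\alpha\ge1$, and $Lu=u^{(2n)}+\sum_{k=0}^{2n-1}a_ku^{(k)}$ on $I$. Define $\widetilde L u=u^{(2n)}+\sum_{k=0}^{n-1}(\hat a_{2k+1}u^{(2k+1)}+\tilde a_{2k}u^{(2k)})$ on $J$, where $\tilde a_{2k}=a_{2k}$ and $\hat a_{2k+1}=a_{2k+1}$ on $I$, and $\tilde a_{2k}(t)=a_{2k}(2T-t)$, $\hat a_{2k+1}(t)=-a_{2k+1}(2T-t)$ for $t\in(T,2T]$.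 Define $\widetilde{\widetilde L}$ on $[0,4T]$ by applying the same construction to $\widetilde L$ (reflection about $2T$). An operator $M$ is nonresonant in a Banach space $X\subset W^{2n,1}(K)$ if $Mu=0$ a.e., $u\in X$, forces $u\equiv0$; then $Mu=\sigma$, $u\in X$ has for every $\sigma\in L^1(K)$ the unique solution $u(t)=\int_K G(t,s)\sigma(s)ds$, $G$ being the Green's function. Green's functions (each defined when the operator is nonresonant in the indicated space; $k$ ranges over $0,\dots,n-1$ unless stated): $G_{M_1}[T]$ for $L$ on $\{u\in W^{2n,1}(I): u^{(2k+1)}(0)=u^{(2k)}(T)=0\}$; $G_{M_2}[T]$ for $L$ on $\{u\in W^{2n,1}(I): u^{(2k)}(0)=u^{(2k+1)}(T)=0\}$; $G_A[2T]$ for $\widetilde L$ on $\{u\in W^{2n,1}(J): u^{(k)}(0)=-u^{(k)}(2T),\ k=0,\dots,2n-1\}$; $G_N[2T]$ for $\widetilde L$ on $\{u\in W^{2n,1}(J): u^{(2k+1)}(0)=u^{(2k+1)}(2T)=0\}$; $G_D[2T]$ for $\widetilde L$ on $\{u\in W^{2n,1}(J): u^{(2k)}(0)=u^{(2k)}(2T)=0\}$; $G_P[4T]$ for $\widetilde{\widetilde L}$ on $\{u\in W^{2n,1}([0,4T]): u^{(k)}(0)=u^{(k)}(4T),\ k=0,\dots,2n-1\}$. *)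

theory Defs
  imports "HOL-Analysis.Analysis"
begin

definition abs_cont_on :: "real set \<Rightarrow> (real \<Rightarrow> real) \<Rightarrow> bool" where
  "abs_cont_on K f \<longleftrightarrow>
     (\<forall>\<epsilon>>0. \<exists>\<delta>>0. \<forall>(m::nat) (x::nat \<Rightarrow> real) y.
        (\<forall>i<m. x i \<in> K \<and> y i \<in> K \<and> x i \<le> y i) \<and>
        (\<forall>i. Suc i < m \<longrightarrow> y i \<le> x (Suc i)) \<and>
        (\<Sum>i<m. y i - x i) < \<delta>
        \<longrightarrow> (\<Sum>i<m. \<bar>f (y i) - f (x i)\<bar>) < \<epsilon>)"

text \<open>D k plays the role of u^(k) (D 0 = u).  sol n K a sigma D: the function u = D 0 lies in
  W^{2n,1}(K) (D 0..D(2n-1) are successive derivatives on K, one-sided at the endpoints, and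
  D(2n-1) is absolutely continuous on K) and
  u^(2n) + sum_{k<2n} a k * u^(k) = sigma  almost everywhere on K.\<close>
definition sol :: "nat \<Rightarrow> real set \<Rightarrow> (nat \<Rightarrow> real \<Rightarrow> real) \<Rightarrow> (real \<Rightarrow> real)
                   \<Rightarrow> (nat \<Rightarrow> real \<Rightarrow> real) \<Rightarrow> bool" where
  "sol n K a \<sigma> D \<longleftrightarrow>
     (\<forall>k < 2*n - 1. \<forall>t\<in>K. (D k has_real_derivative D (Suc k) t) (at t within K)) \<and>
     abs_cont_on K (D (2*n - 1)) \<and>
     (AE t in lebesgue_on K.
        (D (2*n - 1) has_real_derivative (\<sigma> t - (\<Sum>k<2*n. a k t * D k t))) (at t within K))"

definition nonresonant :: "nat \<Rightarrow> real set \<Rightarrow> (nat \<Rightarrow> real \<Rightarrow> real)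
                           \<Rightarrow> ((nat \<Rightarrow> real \<Rightarrow> real) \<Rightarrow> bool) \<Rightarrow> bool" where
  "nonresonant n K a BC \<longleftrightarrow>
     (\<forall>D. sol n K a (\<lambda>_. 0) D \<and> BC D \<longrightarrow> (\<forall>t\<in>K. D 0 t = 0))"

definition green :: "nat \<Rightarrow> real set \<Rightarrow> (nat \<Rightarrow> real \<Rightarrow> real)
                     \<Rightarrow> ((nat \<Rightarrow> real \<Rightarrow> real) \<Rightarrow> bool) \<Rightarrow> (real \<Rightarrow> real \<Rightarrow> real) \<Rightarrow> bool" where
  "green n K a BC G \<longleftrightarrow> nonresonant n K a BC \<and>
     (\<forall>\<sigma>. integrable (lebesgue_on K) \<sigma> \<longrightarrow>
        (\<exists>D. sol n K a \<sigma> D \<and> BC D \<and>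
           (\<forall>t\<in>K. integrable (lebesgue_on K) (\<lambda>s. G t s * \<sigma> s) \<and>
                   D 0 t = integral\<^sup>L (lebesgue_on K) (\<lambda>s. G t s * \<sigma> s))))"

definition refl_coeffs :: "real \<Rightarrow> (nat \<Rightarrow> real \<Rightarrow> real) \<Rightarrow> nat \<Rightarrow> real \<Rightarrow> real" where
  "refl_coeffs c a k t = (if t \<le> c then a k t else (if even k then 1 else -1) * a k (2*c - t))"

definition BC_M1 :: "nat \<Rightarrow> real \<Rightarrow> (nat \<Rightarrow> real \<Rightarrow> real) \<Rightarrow> bool" where
  "BC_M1 n T D \<longleftrightarrow> (\<forall>k<n. D (2*k+1) 0 = 0 \<and> D (2*k) T = 0)"
definition BC_M2 :: "nat \<Rightarrow> real \<Rightarrow> (nat \<Rightarrow> real \<Rightarrow> real) \<Rightarrow> bool" where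
  "BC_M2 n T D \<longleftrightarrow> (\<forall>k<n. D (2*k) 0 = 0 \<and> D (2*k+1) T = 0)"
definition BC_A :: "nat \<Rightarrow> real \<Rightarrow> (nat \<Rightarrow> real \<Rightarrow> real) \<Rightarrow> bool" where
  "BC_A n S D \<longleftrightarrow> (\<forall>k<2*n. D k 0 = - D k S)"
definition BC_N :: "nat \<Rightarrow> real \<Rightarrow> (nat \<Rightarrow> real \<Rightarrow> real) \<Rightarrow> bool" where
  "BC_N n S D \<longleftrightarrow> (\<forall>k<n. D (2*k+1) 0 = 0 \<and> D (2*k+1) S = 0)"
definition BC_D :: "nat \<Rightarrow> real \<Rightarrow> (nat \<Rightarrow> real \<Rightarrow> real) \<Rightarrow> bool" where
  "BC_D n S D \<longleftrightarrow> (\<forall>k<n. D (2*k) 0 = 0 \<and> D (2*k) S = 0)"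
definition BC_P :: "nat \<Rightarrow> real \<Rightarrow> (nat \<Rightarrow> real \<Rightarrow> real) \<Rightarrow> bool" where
  "BC_P n S D \<longleftrightarrow> (\<forall>k<2*n. D k 0 = D k S)"

end

theory Submission
  imports Defs
begin

text \<open>Let W solve the extended problem on [0, 2T] (or [0, 4T]) with the forcing term \<sigma>
  extended by zero. Because the extended coefficients are reflected with the sign (-1)^k,
  every copy t \<mapsto> e^k W^(k)(e t + d) with e = \<plusminus>1 solves an equation with the original
  coefficients on [0, T], so a suitable combination of such copies solves L u = \<sigma> there and
  inherits the mixed boundary conditions from the periodic, antiperiodic, Neumann or Dirichlet
  ones. By nonresonance it is the solution given by G_M, hence
  \<integral> (G_M(t,s) - \<Sum> c G(e t + d, s)) \<sigma>(s) ds = 0 for every integrable \<sigma>, and the two kernels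
  agree for almost every s.\<close>

definition abs_cont_modulus :: "real set \<Rightarrow> (real \<Rightarrow> real) \<Rightarrow> real \<Rightarrow> real \<Rightarrow> bool" where
  "abs_cont_modulus K f \<epsilon> \<delta> \<longleftrightarrow> (\<forall>(m::nat) (x::nat \<Rightarrow> real) y.
        (\<forall>i<m. x i \<in> K \<and> y i \<in> K \<and> x i \<le> y i) \<and>
        (\<forall>i. Suc i < m \<longrightarrow> y i \<le> x (Suc i)) \<and>
        (\<Sum>i<m. y i - x i) < \<delta>
        \<longrightarrow> (\<Sum>i<m. \<bar>f (y i) - f (x i)\<bar>) < \<epsilon>)"

lemma abs_cont_on_iff_modulus:
  "abs_cont_on K f \<longleftrightarrow> (\<forall>\<epsilon>>0. \<exists>\<delta>>0. abs_cont_modulus K f \<epsilon> \<delta>)"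
  unfolding abs_cont_on_def abs_cont_modulus_def by simp

lemma abs_cont_modulusD:
  assumes "abs_cont_modulus K f \<epsilon> \<delta>"
    and "\<forall>i<m. x i \<in> K \<and> y i \<in> K \<and> x i \<le> y i" "\<forall>i. Suc i < m \<longrightarrow> y i \<le> x (Suc i)"
    and "(\<Sum>i<m. y i - x i) < \<delta>"
  shows "(\<Sum>i<m. \<bar>f (y i) - f (x i)\<bar>) < \<epsilon>"
  using assms unfolding abs_cont_modulus_def by blast

lemma abs_cont_on_const: "abs_cont_on K (\<lambda>t. c)"
  unfolding abs_cont_on_def by (auto intro: exI[of _ 1])

lemma abs_cont_on_add:
  assumes f: "abs_cont_on K f" and g: "abs_cont_on K g"
  shows "abs_cont_on K (\<lambda>t. f t + g t)"
  unfolding abs_cont_on_iff_modulus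
proof (intro allI impI)
  fix \<epsilon> :: real assume "\<epsilon> > 0"
  then obtain d1 d2 where d: "d1 > 0" "abs_cont_modulus K f (\<epsilon>/2) d1"
      "d2 > 0" "abs_cont_modulus K g (\<epsilon>/2) d2"
    using f g unfolding abs_cont_on_iff_modulus by (meson half_gt_zero)
  show "\<exists>\<delta>>0. abs_cont_modulus K (\<lambda>t. f t + g t) \<epsilon> \<delta>"
    unfolding abs_cont_modulus_def
  proof (intro exI[of _ "min d1 d2"] conjI allI impI)
    show "min d1 d2 > 0" using d by simp
    fix m and x y :: "nat \<Rightarrow> real"
    assume H: "(\<forall>i<m. x i \<in> K \<and> y i \<in> K \<and> x i \<le> y i) \<and>
        (\<forall>i. Suc i < m \<longrightarrow> y i \<le> x (Suc i)) \<and> (\<Sum>i<m. y i - x i) < min d1 d2"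
    have "(\<Sum>i<m. \<bar>(f (y i) + g (y i)) - (f (x i) + g (x i))\<bar>)
       \<le> (\<Sum>i<m. \<bar>f (y i) - f (x i)\<bar>) + (\<Sum>i<m. \<bar>g (y i) - g (x i)\<bar>)"
      unfolding sum.distrib[symmetric] by (intro sum_mono) linarith
    also have "\<dots> < \<epsilon>/2 + \<epsilon>/2"
      using abs_cont_modulusD[OF d(2), of m x y] abs_cont_modulusD[OF d(4), of m x y] H by auto
    finally show "(\<Sum>i<m. \<bar>(f (y i) + g (y i)) - (f (x i) + g (x i))\<bar>) < \<epsilon>" by simp
  qed
qed

lemma abs_cont_on_cmult:
  assumes f: "abs_cont_on K f"
  shows "abs_cont_on K (\<lambda>t. c * f t)"
proof (cases "c = 0")
  case True
  then show ?thesis by (simp add: abs_cont_on_const)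
next
  case False
  show ?thesis unfolding abs_cont_on_iff_modulus
  proof (intro allI impI)
    fix \<epsilon> :: real assume "\<epsilon> > 0"
    then obtain d where d: "d > 0" "abs_cont_modulus K f (\<epsilon>/\<bar>c\<bar>) d"
      using f False unfolding abs_cont_on_iff_modulus by (meson divide_pos_pos zero_less_abs_iff)
    show "\<exists>\<delta>>0. abs_cont_modulus K (\<lambda>t. c * f t) \<epsilon> \<delta>" unfolding abs_cont_modulus_def
    proof (intro exI[of _ d] conjI allI impI)
      fix m and x y :: "nat \<Rightarrow> real"
      assume H: "(\<forall>i<m. x i \<in> K \<and> y i \<in> K \<and> x i \<le> y i) \<and>
        (\<forall>i. Suc i < m \<longrightarrow> y i \<le> x (Suc i)) \<and> (\<Sum>i<m. y i - x i) < d"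
      have "(\<Sum>i<m. \<bar>c * f (y i) - c * f (x i)\<bar>) = \<bar>c\<bar> * (\<Sum>i<m. \<bar>f (y i) - f (x i)\<bar>)"
        by (simp add: sum_distrib_left abs_mult right_diff_distrib[symmetric])
      also have "\<dots> < \<bar>c\<bar> * (\<epsilon>/\<bar>c\<bar>)"
        using abs_cont_modulusD[OF d(2), of m x y] H False by (intro mult_strict_left_mono) auto
      finally show "(\<Sum>i<m. \<bar>c * f (y i) - c * f (x i)\<bar>) < \<epsilon>" using False by simp
    qed (fact d(1))
  qed
qed

lemma abs_cont_on_translate:
  assumes f: "abs_cont_on K' f" and into: "\<forall>t\<in>K. t + d \<in> K'"
  shows "abs_cont_on K (\<lambda>t. f (t + d))"
  unfolding abs_cont_on_iff_modulus
proof (intro allI impI)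
  fix \<epsilon> :: real assume "\<epsilon> > 0"
  then obtain \<delta> where \<delta>: "\<delta> > 0" "abs_cont_modulus K' f \<epsilon> \<delta>"
    using f unfolding abs_cont_on_iff_modulus by blast
  have "abs_cont_modulus K (\<lambda>t. f (t + d)) \<epsilon> \<delta>"
    unfolding abs_cont_modulus_def
  proof (intro allI impI)
    fix m and x y :: "nat \<Rightarrow> real"
    assume H: "(\<forall>i<m. x i \<in> K \<and> y i \<in> K \<and> x i \<le> y i) \<and>
        (\<forall>i. Suc i < m \<longrightarrow> y i \<le> x (Suc i)) \<and> (\<Sum>i<m. y i - x i) < \<delta>"
    show "(\<Sum>i<m. \<bar>f (y i + d) - f (x i + d)\<bar>) < \<epsilon>"
      by (rule abs_cont_modulusD[OF \<delta>(2), of m "\<lambda>i. x i + d" "\<lambda>i. y i + d", simplified])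
         (use H into in auto)
  qed
  with \<delta>(1) show "\<exists>\<delta>>0. abs_cont_modulus K (\<lambda>t. f (t + d)) \<epsilon> \<delta>" by blast
qed

text \<open>Under t \<mapsto> d - t a family of non-overlapping intervals is listed in reverse order.\<close>
lemma abs_cont_on_reflect:
  assumes f: "abs_cont_on K' f" and into: "\<forall>t\<in>K. d - t \<in> K'"
  shows "abs_cont_on K (\<lambda>t. f (d - t))"
  unfolding abs_cont_on_iff_modulus
proof (intro allI impI)
  fix \<epsilon> :: real assume "\<epsilon> > 0"
  then obtain \<delta> where \<delta>: "\<delta> > 0" "abs_cont_modulus K' f \<epsilon> \<delta>"
    using f unfolding abs_cont_on_iff_modulus by blast
  have "abs_cont_modulus K (\<lambda>t. f (d - t)) \<epsilon> \<delta>"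
    unfolding abs_cont_modulus_def
  proof (intro allI impI)
    fix m and x y :: "nat \<Rightarrow> real"
    assume H: "(\<forall>i<m. x i \<in> K \<and> y i \<in> K \<and> x i \<le> y i) \<and>
        (\<forall>i. Suc i < m \<longrightarrow> y i \<le> x (Suc i)) \<and> (\<Sum>i<m. y i - x i) < \<delta>"
    let ?x = "\<lambda>i. d - y (m - Suc i)" and ?y = "\<lambda>i. d - x (m - Suc i)"
    have "(\<Sum>i<m. \<bar>f (?y i) - f (?x i)\<bar>) < \<epsilon>"
    proof (rule abs_cont_modulusD[OF \<delta>(2)])
      show "\<forall>i<m. ?x i \<in> K' \<and> ?y i \<in> K' \<and> ?x i \<le> ?y i"
        using H into by (auto dest: diff_less[OF zero_less_Suc])
      show "\<forall>i. Suc i < m \<longrightarrow> ?y i \<le> ?x (Suc i)"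
      proof (intro allI impI)
        fix i assume i: "Suc i < m"
        then have "y (m - Suc (Suc i)) \<le> x (Suc (m - Suc (Suc i)))" using H by auto
        moreover have "Suc (m - Suc (Suc i)) = m - Suc i" using i by simp
        ultimately show "?y i \<le> ?x (Suc i)" by simp
      qed
      have "(\<Sum>i<m. ?y i - ?x i) = (\<Sum>i<m. y i - x i)"
        using sum.nat_diff_reindex[of "\<lambda>i. y i - x i" m] by simp
      then show "(\<Sum>i<m. ?y i - ?x i) < \<delta>" using H by simp
    qed
    moreover have "(\<Sum>i<m. \<bar>f (?y i) - f (?x i)\<bar>) = (\<Sum>i<m. \<bar>f (d - y i) - f (d - x i)\<bar>)"
      using sum.nat_diff_reindex[of "\<lambda>i. \<bar>f (d - y i) - f (d - x i)\<bar>" m]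
      by (simp add: abs_minus_commute)
    ultimately show "(\<Sum>i<m. \<bar>f (d - y i) - f (d - x i)\<bar>) < \<epsilon>" by simp
  qed
  with \<delta>(1) show "\<exists>\<delta>>0. abs_cont_modulus K (\<lambda>t. f (d - t)) \<epsilon> \<delta>" by blast
qed

lemma abs_cont_on_compose_unit_affine:
  assumes f: "abs_cont_on K' f" and e: "e = 1 \<or> e = -1" and into: "\<forall>t\<in>K. e * t + d \<in> K'"
  shows "abs_cont_on K (\<lambda>t. f (e * t + d))"
  using e
proof
  assume "e = 1"
  then show ?thesis using abs_cont_on_translate[OF f, of K d] into by simp
next
  assume "e = -1"
  then show ?thesis using abs_cont_on_reflect[OF f, of K d] into by simp
qed

lemma solD:
  assumes "sol n K a \<sigma> D"
  shows "\<And>k t. k < 2*n - 1 \<Longrightarrow> t \<in> K \<Longrightarrow> (D k has_real_derivative D (Suc k) t) (at t within K)"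
    and "abs_cont_on K (D (2*n - 1))"
    and "AE t in lebesgue_on K.
           (D (2*n - 1) has_real_derivative (\<sigma> t - (\<Sum>k<2*n. a k t * D k t))) (at t within K)"
  using assms unfolding sol_def by auto

lemma sol_zero: "sol n K a (\<lambda>_. 0) (\<lambda>_ _. 0)"
  unfolding sol_def by (auto simp: abs_cont_on_const)

lemma sol_add:
  assumes s1: "sol n K a \<sigma>1 D1" and s2: "sol n K a \<sigma>2 D2"
  shows "sol n K a (\<lambda>t. \<sigma>1 t + \<sigma>2 t) (\<lambda>k t. D1 k t + D2 k t)"
  unfolding sol_def
proof (intro conjI ballI allI impI)
  fix k t assume "k < 2*n - 1" "t \<in> K"
  then show "((\<lambda>t. D1 k t + D2 k t) has_real_derivative D1 (Suc k) t + D2 (Suc k) t) (at t within K)"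
    using solD(1)[OF s1] solD(1)[OF s2] by (intro DERIV_add)
next
  show "abs_cont_on K (\<lambda>t. D1 (2*n - 1) t + D2 (2*n - 1) t)"
    using solD(2)[OF s1] solD(2)[OF s2] by (rule abs_cont_on_add)
next
  show "AE t in lebesgue_on K. ((\<lambda>t. D1 (2*n - 1) t + D2 (2*n - 1) t) has_real_derivative
          \<sigma>1 t + \<sigma>2 t - (\<Sum>k<2*n. a k t * (D1 k t + D2 k t))) (at t within K)"
    using solD(3)[OF s1] solD(3)[OF s2]
    by eventually_elim (auto elim!: DERIV_add[THEN DERIV_cong] simp: distrib_left sum.distrib)
qed

lemma sol_cmult:
  assumes s: "sol n K a \<sigma> D"
  shows "sol n K a (\<lambda>t. c * \<sigma> t) (\<lambda>k t. c * D k t)"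
  unfolding sol_def
proof (intro conjI ballI allI impI)
  fix k t assume "k < 2*n - 1" "t \<in> K"
  then show "((\<lambda>t. c * D k t) has_real_derivative c * D (Suc k) t) (at t within K)"
    using solD(1)[OF s] by (intro DERIV_cmult)
next
  show "abs_cont_on K (\<lambda>t. c * D (2*n - 1) t)"
    using solD(2)[OF s] by (rule abs_cont_on_cmult)
next
  show "AE t in lebesgue_on K. ((\<lambda>t. c * D (2*n - 1) t) has_real_derivative
          c * \<sigma> t - (\<Sum>k<2*n. a k t * (c * D k t))) (at t within K)"
    using solD(3)[OF s]
    by eventually_elim
       (auto elim!: DERIV_cmult[THEN DERIV_cong]
             simp: right_diff_distrib sum_distrib_left mult.left_commute)
qed

lemma sol_sum_list:
  assumes "\<forall>x\<in>set xs. sol n K a (\<sigma> x) (D x)"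
  shows "sol n K a (\<lambda>t. \<Sum>x\<leftarrow>xs. \<sigma> x t) (\<lambda>k t. \<Sum>x\<leftarrow>xs. D x k t)"
  using assms by (induction xs) (auto intro: sol_zero sol_add)

lemma sol_cong_AE:
  assumes "sol n K a \<sigma> D" and "AE t in lebesgue_on K. \<sigma> t = \<sigma>' t"
  shows "sol n K a \<sigma>' D"
proof -
  have "AE t in lebesgue_on K.
        (D (2*n - 1) has_real_derivative (\<sigma>' t - (\<Sum>k<2*n. a k t * D k t))) (at t within K)"
    using solD(3)[OF assms(1)] assms(2) by eventually_elim simp
  then show ?thesis using assms(1) unfolding sol_def by auto
qed

lemma nonresonant_sol_unique:
  assumes "nonresonant n K a BC" and "sol n K a \<sigma> D1" "sol n K a \<sigma> D2"
    and "BC (\<lambda>k t. D1 k t - D2 k t)" and "t \<in> K"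
  shows "D1 0 t = D2 0 t"
proof -
  have "sol n K a (\<lambda>t. \<sigma> t + (-1) * \<sigma> t) (\<lambda>k t. D1 k t + (-1) * D2 k t)"
    using assms(2,3) by (intro sol_add sol_cmult)
  then have "sol n K a (\<lambda>_. 0) (\<lambda>k t. D1 k t - D2 k t)" by simp
  then show ?thesis using assms(1,4,5) unfolding nonresonant_def by fastforce
qed

lemma AE_lebesgue_on_compose_unit_affine:
  fixes e d :: real
  assumes e: "e = 1 \<or> e = -1" and P: "AE x in lebesgue_on K'. P x"
    and K: "K \<in> sets lebesgue" "K' \<in> sets lebesgue" and into: "\<forall>t\<in>K. e * t + d \<in> K'"
  shows "AE t in lebesgue_on K. P (e * t + d)"
proof -
  have "AE x in lebesgue. x \<in> K' \<longrightarrow> P x" using P K(2) by (simp add: AE_restrict_space_iff)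
  then obtain N where "{x \<in> space lebesgue. \<not> (x \<in> K' \<longrightarrow> P x)} \<subseteq> N"
      "emeasure lebesgue N = 0" "N \<in> sets lebesgue"
    by (rule AE_E)
  then have N: "{x. \<not> (x \<in> K' \<longrightarrow> P x)} \<subseteq> N" "N \<in> null_sets lebesgue"
    by (auto intro: null_setsI)
  let ?inv = "\<lambda>x::real. e * (x - d)"
  have "?inv differentiable_on N"
    by (auto simp: differentiable_on_def differentiable_def intro!: exI derivative_eq_intros)
  then have "negligible (?inv ` N)"
    using N(2) negligible_iff_null_sets by (blast intro: negligible_differentiable_image_negligible)
  then have "AE t in lebesgue. t \<notin> ?inv ` N"
    using AE_iff_null_sets negligible_iff_null_sets null_setsD2 by blast
  then have "AE t in lebesgue. t \<in> K \<longrightarrow> P (e * t + d)"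
  proof eventually_elim
    case (elim t)
    show ?case
    proof
      assume "t \<in> K"
      have "?inv (e * t + d) = t" using e by auto
      then have "e * t + d \<notin> N" using elim by (metis image_eqI)
      then show "P (e * t + d)" using N(1) into \<open>t \<in> K\<close> by auto
    qed
  qed
  then show ?thesis using K(1) by (simp add: AE_restrict_space_iff)
qed

lemma sol_compose_unit_affine:
  assumes s: "sol n K' b \<sigma> D" and n: "n \<ge> 1" and e: "e = 1 \<or> e = -1"
    and into: "\<forall>t\<in>K. e * t + d \<in> K'" and K: "K \<in> sets lebesgue" "K' \<in> sets lebesgue"
    and coeffs: "AE t in lebesgue_on K. \<forall>k<2*n. b k (e * t + d) = e ^ k * a k t"
  shows "sol n K a (\<lambda>t. \<sigma> (e * t + d)) (\<lambda>k t. e ^ k * D k (e * t + d))"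
proof -
  have chain: "((\<lambda>t. e ^ k * D k (e * t + d)) has_real_derivative e ^ Suc k * D') (at t within K)"
    if "(D k has_real_derivative D') (at (e * t + d) within K')" "t \<in> K" for k t D'
  proof -
    have "(D k has_real_derivative D') (at (e * t + d) within (\<lambda>t. e * t + d) ` K)"
      by (rule has_field_derivative_subset[OF that(1)]) (use into in auto)
    moreover have "((\<lambda>t. e * t + d) has_real_derivative e) (at t within K)"
      by (auto intro!: derivative_eq_intros)
    ultimately have "(D k \<circ> (\<lambda>t. e * t + d) has_real_derivative D' * e) (at t within K)"
      by (rule DERIV_image_chain)
    from DERIV_cmult[OF this, of "e ^ k"] show ?thesis
      unfolding o_def by (simp add: mult_ac)
  qed
  show ?thesis unfolding sol_def
  proof (intro conjI ballI allI impI)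
    fix k t assume "k < 2*n - 1" "t \<in> K"
    then show "((\<lambda>t. e ^ k * D k (e * t + d)) has_real_derivative e ^ Suc k * D (Suc k) (e * t + d))
        (at t within K)"
      using solD(1)[OF s] into by (intro chain) auto
  next
    show "abs_cont_on K (\<lambda>t. e ^ (2*n - 1) * D (2*n - 1) (e * t + d))"
      by (intro abs_cont_on_cmult abs_cont_on_compose_unit_affine[OF solD(2)[OF s] e into])
  next
    have "AE t in lebesgue_on K. (D (2*n - 1) has_real_derivative
        (\<sigma> (e * t + d) - (\<Sum>k<2*n. b k (e * t + d) * D k (e * t + d)))) (at (e * t + d) within K')"
      by (rule AE_lebesgue_on_compose_unit_affine[OF e solD(3)[OF s] K into])
    moreover have "AE t in lebesgue_on K. t \<in> K"
      using AE_space[of "lebesgue_on K"] by simp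
    ultimately show "AE t in lebesgue_on K. ((\<lambda>t. e ^ (2*n - 1) * D (2*n - 1) (e * t + d))
        has_real_derivative \<sigma> (e * t + d) - (\<Sum>k<2*n. a k t * (e ^ k * D k (e * t + d))))
        (at t within K)"
      using coeffs
    proof eventually_elim
      case (elim t)
      have "(\<Sum>k<2*n. b k (e * t + d) * D k (e * t + d)) = (\<Sum>k<2*n. a k t * (e ^ k * D k (e * t + d)))"
        using elim(3) by (intro sum.cong) auto
      moreover have "e ^ Suc (2*n - 1) = 1"
      proof -
        have "Suc (2*n - 1) = 2*n" using n by simp
        then show ?thesis using e by (elim disjE) simp_all
      qed
      ultimately show ?case using chain[OF elim(1,2)] by simp
    qed
  qed
qed

lemma AE_zero_if_integrals_vanish:
  fixes H :: "real \<Rightarrow> real"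
  assumes H: "\<And>\<sigma>. integrable (lebesgue_on {a..b}) \<sigma> \<Longrightarrow>
     integrable (lebesgue_on {a..b}) (\<lambda>s. H s * \<sigma> s) \<and>
     integral\<^sup>L (lebesgue_on {a..b}) (\<lambda>s. H s * \<sigma> s) = 0"
  shows "AE s in lebesgue_on {a..b}. H s = 0"
proof -
  let ?M = "lebesgue_on {a..b}"
  have "integrable ?M (\<lambda>s. H s * 1)" using H integrable_const_ivl by blast
  then have Hm: "H \<in> borel_measurable ?M" by simp
  have "finite_measure ?M" by (rule finite_measure_lebesgue_on) simp
  then have "integrable ?M (\<lambda>s. sgn (H s))"
    by (rule finite_measure.integrable_const_bound[where B=1])
       (auto simp: abs_sgn_eq intro!: measurable_compose[OF Hm])
  then have "integrable ?M (\<lambda>s. H s * sgn (H s)) \<and> integral\<^sup>L ?M (\<lambda>s. H s * sgn (H s)) = 0"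
    by (rule H)
  moreover have "(\<lambda>s. H s * sgn (H s)) = (\<lambda>s. \<bar>H s\<bar>)"
    by (auto simp: sgn_real_def fun_eq_iff)
  ultimately have "AE s in ?M. \<bar>H s\<bar> = 0"
    using integral_nonneg_eq_0_iff_AE[of ?M "\<lambda>s. \<bar>H s\<bar>"] by simp
  then show ?thesis by simp
qed

lemma AE_eq_if_integrals_eq:
  fixes F H :: "real \<Rightarrow> real"
  assumes FH: "\<And>\<sigma>. integrable (lebesgue_on {a..b}) \<sigma> \<Longrightarrow>
     integrable (lebesgue_on {a..b}) (\<lambda>s. F s * \<sigma> s) \<and>
     integrable (lebesgue_on {a..b}) (\<lambda>s. H s * \<sigma> s) \<and>
     integral\<^sup>L (lebesgue_on {a..b}) (\<lambda>s. F s * \<sigma> s) = integral\<^sup>L (lebesgue_on {a..b}) (\<lambda>s. H s * \<sigma> s)"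
  shows "AE s in lebesgue_on {a..b}. F s = H s"
proof -
  have "AE s in lebesgue_on {a..b}. F s - H s = 0"
  proof (rule AE_zero_if_integrals_vanish)
    fix \<sigma> :: "real \<Rightarrow> real" assume "integrable (lebesgue_on {a..b}) \<sigma>"
    moreover have "(\<lambda>s. (F s - H s) * \<sigma> s) = (\<lambda>s. F s * \<sigma> s - H s * \<sigma> s)"
      by (simp add: left_diff_distrib)
    ultimately show "integrable (lebesgue_on {a..b}) (\<lambda>s. (F s - H s) * \<sigma> s) \<and>
        integral\<^sup>L (lebesgue_on {a..b}) (\<lambda>s. (F s - H s) * \<sigma> s) = 0"
      using FH by simp
  qed
  then show ?thesis by simp
qed

lemma integrable_zero_extension:
  fixes f :: "real \<Rightarrow> real"
  assumes "S \<subseteq> U" "S \<in> sets lebesgue" "U \<in> sets lebesgue" and "integrable (lebesgue_on S) f"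
  shows "integrable (lebesgue_on U) (\<lambda>x. if x \<in> S then f x else 0)"
proof -
  have "integrable lebesgue (\<lambda>x. if x \<in> S then f x else 0)"
    using assms by (simp add: Lebesgue_Measure.integrable_restrict_UNIV)
  moreover have "(\<lambda>x. if x \<in> U then (if x \<in> S then f x else 0) else 0) = (\<lambda>x. if x \<in> S then f x else 0)"
    using assms(1) by (auto simp: fun_eq_iff)
  ultimately show ?thesis
    using Lebesgue_Measure.integrable_restrict_UNIV[OF assms(3), of "\<lambda>x. if x \<in> S then f x else 0"] by simp
qed

lemma integrable_sum_list:
  "(\<And>x. x \<in> set xs \<Longrightarrow> integrable M (f x)) \<Longrightarrow> integrable M (\<lambda>s. \<Sum>x\<leftarrow>xs. f x s)"
  by (induction xs) auto

lemma integral_sum_list: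
  "(\<And>x. x \<in> set xs \<Longrightarrow> integrable M (f x)) \<Longrightarrow>
    integral\<^sup>L M (\<lambda>s. \<Sum>x\<leftarrow>xs. f x s) = (\<Sum>x\<leftarrow>xs. integral\<^sup>L M (f x))"
  by (induction xs) (auto simp: integrable_sum_list)

lemma green_zero_extension:
  assumes G: "green n {0..L} b BC G" and "T \<le> L" and \<sigma>: "integrable (lebesgue_on {0..T}) \<sigma>"
  obtains W where "sol n {0..L} b (\<lambda>s. if s \<in> {0..T} then \<sigma> s else 0) W" "BC W"
    "\<And>x. x \<in> {0..L} \<Longrightarrow> integrable (lebesgue_on {0..T}) (\<lambda>s. G x s * \<sigma> s)"
    "\<And>x. x \<in> {0..L} \<Longrightarrow> W 0 x = integral\<^sup>L (lebesgue_on {0..T}) (\<lambda>s. G x s * \<sigma> s)"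
proof -
  let ?\<sigma> = "\<lambda>s. if s \<in> {0..T} then \<sigma> s else 0"
  have "integrable (lebesgue_on {0..L}) ?\<sigma>"
    using \<open>T \<le> L\<close> \<sigma> by (intro integrable_zero_extension) auto
  then obtain W where W: "sol n {0..L} b ?\<sigma> W" "BC W"
    "\<forall>x\<in>{0..L}. integrable (lebesgue_on {0..L}) (\<lambda>s. G x s * ?\<sigma> s) \<and>
                 W 0 x = integral\<^sup>L (lebesgue_on {0..L}) (\<lambda>s. G x s * ?\<sigma> s)"
    using G unfolding green_def by blast
  show thesis
  proof (rule that[OF W(1,2)])
    fix x assume x: "x \<in> {0..L}"
    have eq: "(\<lambda>s. G x s * ?\<sigma> s) = (\<lambda>s. if s \<in> {0..T} then G x s * \<sigma> s else 0)"
      by (simp add: fun_eq_iff)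
    have "integrable (lebesgue_on {0..L}) (\<lambda>s. G x s * ?\<sigma> s)" using W(3) x by blast
    then have "integrable (lebesgue_on {0..T}) (\<lambda>s. G x s * ?\<sigma> s)"
      by (rule integrable_subinterval) (use \<open>T \<le> L\<close> in simp)
    moreover have "integrable (lebesgue_on {0..T}) (\<lambda>s. G x s * ?\<sigma> s) \<longleftrightarrow>
        integrable (lebesgue_on {0..T}) (\<lambda>s. G x s * \<sigma> s)"
      by (rule Bochner_Integration.integrable_cong) simp_all
    ultimately show "integrable (lebesgue_on {0..T}) (\<lambda>s. G x s * \<sigma> s)" by blast
    have "W 0 x = integral\<^sup>L (lebesgue_on {0..L}) (\<lambda>s. G x s * ?\<sigma> s)"
      using W(3) x by simp
    also have "\<dots> = integral\<^sup>L (lebesgue_on {0..L}) (\<lambda>s. if s \<in> {0..T} then G x s * \<sigma> s else 0)"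
      unfolding eq ..
    also have "\<dots> = integral\<^sup>L (lebesgue_on {0..T}) (\<lambda>s. G x s * \<sigma> s)"
      using \<open>T \<le> L\<close> by (intro Lebesgue_Measure.integral_restrict) auto
    finally show "W 0 x = integral\<^sup>L (lebesgue_on {0..T}) (\<lambda>s. G x s * \<sigma> s)" .
  qed
qed

lemma sol_sum_reflections:
  fixes rs :: "(real \<times> real \<times> real) list"
  assumes W: "sol n K' b \<sigma> W" and n: "n \<ge> 1" and K: "K \<in> sets lebesgue" "K' \<in> sets lebesgue"
    and unit: "\<forall>(c, e, d)\<in>set rs. e = 1 \<or> e = -1"
    and into: "\<forall>(c, e, d)\<in>set rs. \<forall>t\<in>K. e * t + d \<in> K'"
    and coeffs: "AE t in lebesgue_on K. \<forall>(c, e, d)\<in>set rs. \<forall>k<2*n. b k (e * t + d) = e ^ k * a k t"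
  shows "sol n K a (\<lambda>t. \<Sum>(c, e, d)\<leftarrow>rs. c * \<sigma> (e * t + d))
           (\<lambda>k t. \<Sum>(c, e, d)\<leftarrow>rs. c * (e ^ k * W k (e * t + d)))"
proof -
  let ?\<sigma>r = "\<lambda>r t. case r of (c, e, d) \<Rightarrow> c * \<sigma> (e * t + d)"
  let ?Wr = "\<lambda>r k t. case r of (c, e, d) \<Rightarrow> c * (e ^ k * W k (e * t + d))"
  have "\<forall>r\<in>set rs. sol n K a (?\<sigma>r r) (?Wr r)"
  proof
    fix r assume r: "r \<in> set rs"
    obtain c e d where r_eq: "r = (c, e, d)" by (cases r)
    have "AE t in lebesgue_on K. \<forall>k<2*n. b k (e * t + d) = e ^ k * a k t"
      using coeffs by eventually_elim (use r r_eq in auto)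
    then have "sol n K a (\<lambda>t. \<sigma> (e * t + d)) (\<lambda>k t. e ^ k * W k (e * t + d))"
      using unit into r r_eq by (intro sol_compose_unit_affine[OF W n _ _ K]) auto
    then show "sol n K a (?\<sigma>r r) (?Wr r)"
      unfolding r_eq by (simp add: sol_cmult)
  qed
  then show ?thesis by (rule sol_sum_list)
qed

lemma green_eq_sum_reflections:
  fixes rs :: "(real \<times> real \<times> real) list"
  assumes n: "n \<ge> 1" and "T \<le> L"
    and GM: "green n {0..T} a BC GM" and G: "green n {0..L} b BC' G"
    and unit: "\<forall>(c, e, d)\<in>set rs. e = 1 \<or> e = -1"
    and into: "\<forall>(c, e, d)\<in>set rs. \<forall>t\<in>{0..T}. e * t + d \<in> {0..L}"
    and coeffs: "AE t in lebesgue_on {0..T}.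
       \<forall>(c, e, d)\<in>set rs. \<forall>k<2*n. b k (e * t + d) = e ^ k * a k t"
    and forcing: "AE t in lebesgue_on {0..T}. \<forall>\<sigma>.
       (\<Sum>(c, e, d)\<leftarrow>rs. c * (if e * t + d \<in> {0..T} then \<sigma> (e * t + d) else 0)) = \<sigma> t"
    and bc: "\<And>W. BC' W \<Longrightarrow> BC (\<lambda>k t. \<Sum>(c, e, d)\<leftarrow>rs. c * (e ^ k * W k (e * t + d)))"
    and bc_diff: "\<And>D1 D2. BC D1 \<Longrightarrow> BC D2 \<Longrightarrow> BC (\<lambda>k t. D1 k t - D2 k t)"
    and t: "t \<in> {0..T}"
  shows "AE s in lebesgue_on {0..T}. GM t s = (\<Sum>(c, e, d)\<leftarrow>rs. c * G (e * t + d) s)"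
proof (rule AE_eq_if_integrals_eq)
  let ?img = "\<lambda>r s. case r of (c, e, d) \<Rightarrow> c * G (e * t + d) s"
  fix \<sigma> :: "real \<Rightarrow> real" assume \<sigma>: "integrable (lebesgue_on {0..T}) \<sigma>"
  let ?\<sigma> = "\<lambda>s. if s \<in> {0..T} then \<sigma> s else 0"
  obtain W where W: "sol n {0..L} b ?\<sigma> W" "BC' W"
      "\<And>x. x \<in> {0..L} \<Longrightarrow> integrable (lebesgue_on {0..T}) (\<lambda>s. G x s * \<sigma> s)"
      "\<And>x. x \<in> {0..L} \<Longrightarrow> W 0 x = integral\<^sup>L (lebesgue_on {0..T}) (\<lambda>s. G x s * \<sigma> s)"
    by (rule green_zero_extension[OF G \<open>T \<le> L\<close> \<sigma>]) (rule that)
  have nr: "nonresonant n {0..T} a BC" using GM by (simp add: green_def)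
  have "\<exists>D. sol n {0..T} a \<sigma> D \<and> BC D \<and>
      (\<forall>x\<in>{0..T}. integrable (lebesgue_on {0..T}) (\<lambda>s. GM x s * \<sigma> s) \<and>
                 D 0 x = integral\<^sup>L (lebesgue_on {0..T}) (\<lambda>s. GM x s * \<sigma> s))"
    using GM \<sigma> by (simp add: green_def)
  then obtain D where D: "sol n {0..T} a \<sigma> D" "BC D"
      "\<forall>x\<in>{0..T}. integrable (lebesgue_on {0..T}) (\<lambda>s. GM x s * \<sigma> s) \<and>
                 D 0 x = integral\<^sup>L (lebesgue_on {0..T}) (\<lambda>s. GM x s * \<sigma> s)"
    by blast
  let ?u = "\<lambda>k t. \<Sum>(c, e, d)\<leftarrow>rs. c * (e ^ k * W k (e * t + d))"
  have "sol n {0..T} a (\<lambda>t. \<Sum>(c, e, d)\<leftarrow>rs. c * ?\<sigma> (e * t + d)) ?u"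
    by (rule sol_sum_reflections[OF W(1) n _ _ unit into coeffs]) auto
  then have u: "sol n {0..T} a \<sigma> ?u"
    by (rule sol_cong_AE) (use forcing in \<open>auto elim: eventually_mono\<close>)
  have int_img: "integrable (lebesgue_on {0..T}) (\<lambda>s. ?img r s * \<sigma> s)"
    and u_img: "(case r of (c, e, d) \<Rightarrow> c * (e ^ 0 * W 0 (e * t + d)))
                  = integral\<^sup>L (lebesgue_on {0..T}) (\<lambda>s. ?img r s * \<sigma> s)"
    if "r \<in> set rs" for r
  proof -
    obtain c e d where r: "r = (c, e, d)" by (cases r)
    then have "e * t + d \<in> {0..L}" using into t that by auto
    then show "integrable (lebesgue_on {0..T}) (\<lambda>s. ?img r s * \<sigma> s)"
      and "(case r of (c, e, d) \<Rightarrow> c * (e ^ 0 * W 0 (e * t + d)))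
             = integral\<^sup>L (lebesgue_on {0..T}) (\<lambda>s. ?img r s * \<sigma> s)"
      using W(3,4) unfolding r by (simp_all add: mult.assoc)
  qed
  have "integral\<^sup>L (lebesgue_on {0..T}) (\<lambda>s. GM t s * \<sigma> s) = ?u 0 t"
    using nonresonant_sol_unique[OF nr D(1) u bc_diff[OF D(2) bc[OF W(2)]] t] D(3) t by simp
  also have "\<dots> = (\<Sum>r\<leftarrow>rs. integral\<^sup>L (lebesgue_on {0..T}) (\<lambda>s. ?img r s * \<sigma> s))"
    using u_img by (intro arg_cong[where f=sum_list] map_cong) simp_all
  also have "\<dots> = integral\<^sup>L (lebesgue_on {0..T}) (\<lambda>s. (\<Sum>r\<leftarrow>rs. ?img r s) * \<sigma> s)"
    unfolding sum_list_mult_const[symmetric] by (rule integral_sum_list[symmetric]) (rule int_img)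
  finally have "integral\<^sup>L (lebesgue_on {0..T}) (\<lambda>s. GM t s * \<sigma> s) =
      integral\<^sup>L (lebesgue_on {0..T}) (\<lambda>s. (\<Sum>r\<leftarrow>rs. ?img r s) * \<sigma> s)" .
  moreover have "integrable (lebesgue_on {0..T}) (\<lambda>s. (\<Sum>r\<leftarrow>rs. ?img r s) * \<sigma> s)"
    unfolding sum_list_mult_const[symmetric] by (rule integrable_sum_list) (rule int_img)
  moreover have "integrable (lebesgue_on {0..T}) (\<lambda>s. GM t s * \<sigma> s)"
    using D(3) t by simp
  ultimately show "integrable (lebesgue_on {0..T}) (\<lambda>s. GM t s * \<sigma> s) \<and>
      integrable (lebesgue_on {0..T}) (\<lambda>s. (\<Sum>r\<leftarrow>rs. ?img r s) * \<sigma> s) \<and>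
      integral\<^sup>L (lebesgue_on {0..T}) (\<lambda>s. GM t s * \<sigma> s) =
      integral\<^sup>L (lebesgue_on {0..T}) (\<lambda>s. (\<Sum>r\<leftarrow>rs. ?img r s) * \<sigma> s)"
    by blast
qed

lemma refl_coeffs_le: "t \<le> c \<Longrightarrow> refl_coeffs c a k t = a k t"
  by (simp add: refl_coeffs_def)

lemma refl_coeffs_gt: "c < t \<Longrightarrow> refl_coeffs c a k t = (-1) ^ k * a k (2*c - t)"
  by (simp add: refl_coeffs_def)

lemma AE_lebesgue_on_interior:
  fixes a b :: real
  shows "AE t in lebesgue_on {a..b}. a < t \<and> t < b"
proof -
  have "{a, b} \<in> null_sets lebesgue"
    using negligible_iff_null_sets by (blast intro: negligible_finite)
  then have "AE t in lebesgue. t \<notin> {a, b}"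
    using AE_iff_null_sets null_setsD2 by blast
  then have "AE t in lebesgue. t \<in> {a..b} \<longrightarrow> a < t \<and> t < b"
    by eventually_elim auto
  then show ?thesis
    using AE_restrict_space_iff[of "{a..b}" lebesgue "\<lambda>t. a < t \<and> t < b"] by simp
qed

lemma green_eq_reflection_about_T:
  fixes c :: real
  assumes n: "n \<ge> 1" and T: "T > 0"
    and GM: "green n {0..T} a BC GM" and G: "green n {0..2*T} (refl_coeffs T a) BC' G"
    and bc: "\<And>W. BC' W \<Longrightarrow> BC (\<lambda>k t. W k t + c * ((-1) ^ k * W k (2*T - t)))"
    and bc_diff: "\<And>D1 D2. BC D1 \<Longrightarrow> BC D2 \<Longrightarrow> BC (\<lambda>k t. D1 k t - D2 k t)"
    and t: "t \<in> {0..T}"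
  shows "AE s in lebesgue_on {0..T}. GM t s = G t s + c * G (2*T - t) s"
proof -
  have "AE s in lebesgue_on {0..T}.
      GM t s = (\<Sum>(c, e, d)\<leftarrow>[(1, 1, 0), (c, -1, 2*T)]. c * G (e * t + d) s)"
  proof (rule green_eq_sum_reflections[OF n _ GM G _ _ _ _ _ bc_diff t])
    show "AE t in lebesgue_on {0..T}. \<forall>(c, e, d)\<in>set [(1, 1, 0), (c, -1, 2*T)].
        \<forall>k<2*n. refl_coeffs T a k (e * t + d) = e ^ k * a k t"
      using AE_lebesgue_on_interior[of 0 T]
      by eventually_elim (auto simp: refl_coeffs_le refl_coeffs_gt)
    show "AE t in lebesgue_on {0..T}. \<forall>\<sigma>. (\<Sum>(c, e, d)\<leftarrow>[(1, 1, 0), (c, -1, 2*T)].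
        c * (if e * t + d \<in> {0..T} then \<sigma> (e * t + d) else 0)) = \<sigma> t"
      using AE_lebesgue_on_interior[of 0 T] by eventually_elim auto
    show "BC (\<lambda>k t. \<Sum>(c, e, d)\<leftarrow>[(1, 1, 0), (c, -1, 2*T)]. c * (e ^ k * W k (e * t + d)))"
      if "BC' W" for W
      using bc[OF that] by simp
  qed (use T in auto)
  then show ?thesis by simp
qed

lemma green_eq_reflections_about_T_and_2T:
  fixes c1 c2 c3 :: real
  assumes n: "n \<ge> 1" and T: "T > 0"
    and GM: "green n {0..T} a BC GM"
    and G: "green n {0..4*T} (refl_coeffs (2*T) (refl_coeffs T a)) BC' G"
    and bc: "\<And>W. BC' W \<Longrightarrow> BC (\<lambda>k t. W k t + c1 * ((-1) ^ k * W k (4*T - t))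
               + c2 * ((-1) ^ k * W k (2*T - t)) + c3 * W k (2*T + t))"
    and bc_diff: "\<And>D1 D2. BC D1 \<Longrightarrow> BC D2 \<Longrightarrow> BC (\<lambda>k t. D1 k t - D2 k t)"
    and t: "t \<in> {0..T}"
  shows "AE s in lebesgue_on {0..T}.
    GM t s = G t s + c1 * G (4*T - t) s + c2 * G (2*T - t) s + c3 * G (2*T + t) s"
proof -
  let ?rs = "[(1, 1, 0), (c1, -1, 4*T), (c2, -1, 2*T), (c3, 1, 2*T)]"
  have "AE s in lebesgue_on {0..T}. GM t s = (\<Sum>(c, e, d)\<leftarrow>?rs. c * G (e * t + d) s)"
  proof (rule green_eq_sum_reflections[OF n _ GM G _ _ _ _ _ bc_diff t])
    show "AE t in lebesgue_on {0..T}. \<forall>(c, e, d)\<in>set ?rs.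
        \<forall>k<2*n. refl_coeffs (2*T) (refl_coeffs T a) k (e * t + d) = e ^ k * a k t"
      using AE_lebesgue_on_interior[of 0 T]
      by eventually_elim (auto simp: refl_coeffs_le refl_coeffs_gt simp flip: power_mult_distrib)
    show "AE t in lebesgue_on {0..T}. \<forall>\<sigma>. (\<Sum>(c, e, d)\<leftarrow>?rs.
        c * (if e * t + d \<in> {0..T} then \<sigma> (e * t + d) else 0)) = \<sigma> t"
      using AE_lebesgue_on_interior[of 0 T] by eventually_elim auto
    show "BC (\<lambda>k t. \<Sum>(c, e, d)\<leftarrow>?rs. c * (e ^ k * W k (e * t + d)))" if "BC' W" for W
      using bc[OF that] by (simp add: add_ac)
  qed (use T in auto)
  then show ?thesis by (simp add: add_ac)
qed

lemma green_M1_eq_antiperiodic: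
  assumes "n \<ge> 1" "T > 0" "green n {0..T} a (BC_M1 n T) GM"
    and "green n {0..2*T} (refl_coeffs T a) (BC_A n (2*T)) G" "t \<in> {0..T}"
  shows "AE s in lebesgue_on {0..T}. GM t s = G t s - G (2*T - t) s"
proof -
  have "AE s in lebesgue_on {0..T}. GM t s = G t s + -1 * G (2*T - t) s"
    by (rule green_eq_reflection_about_T[OF assms(1-4) _ _ assms(5)])
       (auto simp: BC_A_def BC_M1_def)
  then show ?thesis by simp
qed

lemma green_M2_eq_antiperiodic:
  assumes "n \<ge> 1" "T > 0" "green n {0..T} a (BC_M2 n T) GM"
    and "green n {0..2*T} (refl_coeffs T a) (BC_A n (2*T)) G" "t \<in> {0..T}"
  shows "AE s in lebesgue_on {0..T}. GM t s = G t s + G (2*T - t) s"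
proof -
  have "AE s in lebesgue_on {0..T}. GM t s = G t s + 1 * G (2*T - t) s"
    by (rule green_eq_reflection_about_T[OF assms(1-4) _ _ assms(5)])
       (auto simp: BC_A_def BC_M2_def)
  then show ?thesis by simp
qed

lemma green_M1_eq_neumann:
  assumes "n \<ge> 1" "T > 0" "green n {0..T} a (BC_M1 n T) GM"
    and "green n {0..2*T} (refl_coeffs T a) (BC_N n (2*T)) G" "t \<in> {0..T}"
  shows "AE s in lebesgue_on {0..T}. GM t s = G t s - G (2*T - t) s"
proof -
  have "AE s in lebesgue_on {0..T}. GM t s = G t s + -1 * G (2*T - t) s"
    by (rule green_eq_reflection_about_T[OF assms(1-4) _ _ assms(5)])
       (auto simp: BC_N_def BC_M1_def)
  then show ?thesis by simp
qed

lemma green_M2_eq_dirichlet: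
  assumes "n \<ge> 1" "T > 0" "green n {0..T} a (BC_M2 n T) GM"
    and "green n {0..2*T} (refl_coeffs T a) (BC_D n (2*T)) G" "t \<in> {0..T}"
  shows "AE s in lebesgue_on {0..T}. GM t s = G t s + G (2*T - t) s"
proof -
  have "AE s in lebesgue_on {0..T}. GM t s = G t s + 1 * G (2*T - t) s"
    by (rule green_eq_reflection_about_T[OF assms(1-4) _ _ assms(5)])
       (auto simp: BC_D_def BC_M2_def)
  then show ?thesis by simp
qed

lemma green_M1_eq_periodic:
  assumes "n \<ge> 1" "T > 0" "green n {0..T} a (BC_M1 n T) GM"
    and "green n {0..4*T} (refl_coeffs (2*T) (refl_coeffs T a)) (BC_P n (4*T)) G" "t \<in> {0..T}"
  shows "AE s in lebesgue_on {0..T}.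
    GM t s = G t s + G (4*T - t) s - G (2*T - t) s - G (2*T + t) s"
proof -
  have "AE s in lebesgue_on {0..T}.
      GM t s = G t s + 1 * G (4*T - t) s + -1 * G (2*T - t) s + -1 * G (2*T + t) s"
    by (rule green_eq_reflections_about_T_and_2T[OF assms(1-4) _ _ assms(5)])
       (auto simp: BC_P_def BC_M1_def)
  then show ?thesis by simp
qed

lemma green_M2_eq_periodic:
  assumes "n \<ge> 1" "T > 0" "green n {0..T} a (BC_M2 n T) GM"
    and "green n {0..4*T} (refl_coeffs (2*T) (refl_coeffs T a)) (BC_P n (4*T)) G" "t \<in> {0..T}"
  shows "AE s in lebesgue_on {0..T}.
    GM t s = G t s - G (4*T - t) s + G (2*T - t) s - G (2*T + t) s"
proof -
  have "AE s in lebesgue_on {0..T}.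
      GM t s = G t s + -1 * G (4*T - t) s + 1 * G (2*T - t) s + -1 * G (2*T + t) s"
    by (rule green_eq_reflections_about_T_and_2T[OF assms(1-4) _ _ assms(5)])
       (auto simp: BC_P_def BC_M2_def)
  then show ?thesis by simp
qed

theorem mainTheorem3:
  fixes n :: nat and T \<alpha> :: real and a :: "nat \<Rightarrow> real \<Rightarrow> real"
  assumes "n \<ge> 1" and "T > 0" and "\<alpha> \<ge> 1"
    and "\<forall>k<2*n. a k \<in> borel_measurable (lebesgue_on {0..T}) \<and>
                  integrable (lebesgue_on {0..T}) (\<lambda>t. \<bar>a k t\<bar> powr \<alpha>)"
  shows
   "(\<forall>GM1 GA. green n {0..T} a (BC_M1 n T) GM1 \<and>
        green n {0..2*T} (refl_coeffs T a) (BC_A n (2*T)) GA \<longrightarrow>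
      (\<forall>t\<in>{0..T}. AE s in lebesgue_on {0..T}. GM1 t s = GA t s - GA (2*T - t) s)) \<and>
    (\<forall>GM2 GA. green n {0..T} a (BC_M2 n T) GM2 \<and>
        green n {0..2*T} (refl_coeffs T a) (BC_A n (2*T)) GA \<longrightarrow>
      (\<forall>t\<in>{0..T}. AE s in lebesgue_on {0..T}. GM2 t s = GA t s + GA (2*T - t) s)) \<and>
    (\<forall>GM1 GN. green n {0..T} a (BC_M1 n T) GM1 \<and>
        green n {0..2*T} (refl_coeffs T a) (BC_N n (2*T)) GN \<longrightarrow>
      (\<forall>t\<in>{0..T}. AE s in lebesgue_on {0..T}. GM1 t s = GN t s - GN (2*T - t) s)) \<and>
    (\<forall>GM2 GD. green n {0..T} a (BC_M2 n T) GM2 \<and>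
        green n {0..2*T} (refl_coeffs T a) (BC_D n (2*T)) GD \<longrightarrow>
      (\<forall>t\<in>{0..T}. AE s in lebesgue_on {0..T}. GM2 t s = GD t s + GD (2*T - t) s)) \<and>
    (\<forall>GM1 GP. green n {0..T} a (BC_M1 n T) GM1 \<and>
        green n {0..4*T} (refl_coeffs (2*T) (refl_coeffs T a)) (BC_P n (4*T)) GP \<longrightarrow>
      (\<forall>t\<in>{0..T}. AE s in lebesgue_on {0..T}.
         GM1 t s = GP t s + GP (4*T - t) s - GP (2*T - t) s - GP (2*T + t) s)) \<and>
    (\<forall>GM2 GP. green n {0..T} a (BC_M2 n T) GM2 \<and>
        green n {0..4*T} (refl_coeffs (2*T) (refl_coeffs T a)) (BC_P n (4*T)) GP \<longrightarrow>
      (\<forall>t\<in>{0..T}. AE s in lebesgue_on {0..T}.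
         GM2 t s = GP t s - GP (4*T - t) s + GP (2*T - t) s - GP (2*T + t) s))"
  using green_M1_eq_antiperiodic[OF assms(1,2)] green_M2_eq_antiperiodic[OF assms(1,2)]
    green_M1_eq_neumann[OF assms(1,2)] green_M2_eq_dirichlet[OF assms(1,2)]
    green_M1_eq_periodic[OF assms(1,2)] green_M2_eq_periodic[OF assms(1,2)]
  by (intro conjI allI impI ballI; elim conjE) assumption+

end
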